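(* Let $t \in \mathbb{N}_0$ and $b \in \mathbb{N}$ be such that $\Phi_b(x)$ divides \begin{align*} R_t(x) = {}& x^{8t+15} + x^{8t+14} + x^{8t+11} - x^{8t+10} - x^{8t+8} + 2x^{6t+9} - x^{4t+15} - x^{4t+11} - x^{4t+9} + 2x^{4t+8} \\ & - 2x^{4t+7} + x^{4t+6} + x^{4t+4} + x^{4t} - 2x^{2t+6} + x^7 + x^5 - x^4 - x - 1. \end{align*} Then $4 \nmid b$.
   Context: $\Phi_b(x) = \prod_\zeta (x-\zeta)$, where $\zeta$ ranges over the primitive $b$-th roots of unity, is the $b$-th cyclotomic polynomial. *)

theory Defs
  imports "HOL-Computational_Algebra.Polynomial" Complex_Main
begin

definition primitive_roots_of_unity :: "nat \<Rightarrow> complex set" where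
  "primitive_roots_of_unity b =
     {z. z ^ b = 1 \<and> (\<forall>k. 0 < k \<and> k < b \<longrightarrow> z ^ k \<noteq> 1)}"

definition cyclotomic :: "nat \<Rightarrow> complex poly" where
  "cyclotomic b = (\<Prod>\<zeta>\<in>primitive_roots_of_unity b. [:-\<zeta>, 1:])"

definition R_poly :: "nat \<Rightarrow> complex poly" where
  "R_poly t =
     monom 1 (8*t+15) + monom 1 (8*t+14) + monom 1 (8*t+11) - monom 1 (8*t+10)
   - monom 1 (8*t+8) + monom 2 (6*t+9) - monom 1 (4*t+15) - monom 1 (4*t+11)
   - monom 1 (4*t+9) + monom 2 (4*t+8) - monom 2 (4*t+7) + monom 1 (4*t+6)
   + monom 1 (4*t+4) + monom 1 (4*t) - monom 2 (2*t+6) + monom 1 7 + monom 1 5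
   - monom 1 4 - monom 1 1 - 1"

end

(*
  Suppose 4 | b. For b = 4 one checks R_t(i) \<noteq> 0 directly. For b \<ge> 8, the cyclotomic
  polynomial is a monic integer polynomial in x^2 (z \<mapsto> -z permutes the primitive b-th roots)
  of degree at least 4, so modulo 2 it is the square e^2 of some e \<in> GF(2)[X] with e(0) = 1 and
  deg e \<ge> 2; moreover e^2 divides R_t(X^j) for every j coprime to b, since x \<mapsto> x^j permutes the
  roots of the cyclotomic polynomial.

  Over GF(2), R_t(x) = A(x, x^(2t))^2 + x B(x, x^(2t))^2 for two polynomials A, B quadratic in
  their second argument. For odd j, the uniqueness of the decomposition f = a^2 + X b^2 in GF(2)[X]
  forces e to divide both A and B at x = X^j, hence their resultant X^(5j) (X^j + 1)^6 G(X^j),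
  where G is a factor of X^65 - 1 of degree 12. Taking j = 1 and some j \<equiv> 3 mod 65
  coprime to b, the factor G cannot divide e (G(X) is coprime to G(X^3) and to X^3 + 1), so e
  divides (X + 1)^6 and thus (X + 1)^4 divides e^2, and hence R_t(X). But R_t(X) \<equiv> (X + 1)^3
  modulo (X + 1)^4, because X^(4t) \<equiv> 1 there.
*)

theory Submission
  imports
    Defs
    "HOL-Computational_Algebra.Polynomial_Factorial"
    "HOL-Computational_Algebra.Primes"
    "HOL-Number_Theory.Cong"
    "HOL-Library.Z2"
begin

section \<open>Primitive roots of unity and cyclotomic polynomials\<close>

lemma primitive_roots_of_unity_iff:
  assumes "b \<ge> 1"
  shows "z \<in> primitive_roots_of_unity b \<longleftrightarrow> (\<forall>n. z ^ n = 1 \<longleftrightarrow> b dvd n)"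
proof
  assume z: "z \<in> primitive_roots_of_unity b"
  then have zb: "z ^ b = 1" by (simp add: primitive_roots_of_unity_def)
  show "\<forall>n. z ^ n = 1 \<longleftrightarrow> b dvd n"
  proof (intro allI iffI)
    fix n
    assume "z ^ n = 1"
    moreover have "z ^ n = (z ^ b) ^ (n div b) * z ^ (n mod b)"
      by (simp flip: power_mult power_add)
    ultimately have "z ^ (n mod b) = 1" using zb by simp
    moreover have "n mod b < b" using assms by simp
    ultimately have "n mod b = 0"
      using z by (auto simp: primitive_roots_of_unity_def)
    then show "b dvd n" by (simp add: dvd_eq_mod_eq_0)
  next
    fix n
    assume "b dvd n"
    then show "z ^ n = 1" using zb by (auto simp: power_mult)
  qed
next
  assume "\<forall>n. z ^ n = 1 \<longleftrightarrow> b dvd n"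
  then show "z \<in> primitive_roots_of_unity b"
    by (auto simp: primitive_roots_of_unity_def dest: dvd_imp_le)
qed

lemma primitive_root_pow_eq_1_iff:
  "z \<in> primitive_roots_of_unity b \<Longrightarrow> b \<ge> 1 \<Longrightarrow> z ^ n = 1 \<longleftrightarrow> b dvd n"
  using primitive_roots_of_unity_iff by blast

lemma primitive_root_nonzero:
  "z \<in> primitive_roots_of_unity b \<Longrightarrow> b \<ge> 1 \<Longrightarrow> z \<noteq> 0"
  by (cases b) (auto simp: primitive_roots_of_unity_def)

lemma finite_primitive_roots_of_unity:
  "b \<ge> 1 \<Longrightarrow> finite (primitive_roots_of_unity b)"
  by (rule finite_subset[OF _ finite_roots_unity[of b]])
    (auto simp: primitive_roots_of_unity_def)

lemma primitive_root_pow_coprime: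
  assumes "z \<in> primitive_roots_of_unity b" "b \<ge> 1" "coprime j b"
  shows "z ^ j \<in> primitive_roots_of_unity b"
  using assms primitive_root_pow_eq_1_iff[OF assms(1,2)]
  by (simp add: primitive_roots_of_unity_iff coprime_commute coprime_dvd_mult_right_iff
      flip: power_mult)

lemma primitive_root_inverse:
  assumes "z \<in> primitive_roots_of_unity b" "b \<ge> 1"
  shows "inverse z \<in> primitive_roots_of_unity b"
  using assms primitive_root_pow_eq_1_iff[OF assms(1,2)]
  by (simp add: primitive_roots_of_unity_iff power_inverse)

lemma primitive_root_uminus:
  assumes "z \<in> primitive_roots_of_unity b" "b \<ge> 1" "4 dvd b"
  shows "- z \<in> primitive_roots_of_unity b"
proof -
  note pow_eq_1 = primitive_root_pow_eq_1_iff[OF assms(1,2)]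
  have "(- z) ^ n = 1 \<longleftrightarrow> b dvd n" for n
  proof (cases "even n")
    case True
    then show ?thesis by (simp add: pow_eq_1)
  next
    case False
    have "even b" using assms(3) by (auto intro: dvd_trans[of 2 4 b])
    with False have "\<not> b dvd n" using dvd_trans by blast
    moreover have "(- z) ^ n \<noteq> 1"
    proof
      assume "(- z) ^ n = 1"
      then have "z ^ n = -1"
        using False by (metis minus_minus power_minus_odd)
      then have "z ^ (2 * n) = 1"
        by (simp add: mult.commute[of 2] power_mult)
      then have "b dvd 2 * n" by (simp add: pow_eq_1)
      with assms(3) have "4 dvd 2 * n" by (rule dvd_trans)
      with False show False by presburger
    qed
    ultimately show ?thesis by simp
  qed
  with assms(2) show ?thesis by (simp add: primitive_roots_of_unity_iff)
qed

lemma cis_primitive_root: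
  assumes "b \<ge> 1"
  shows "cis (2 * pi / b) \<in> primitive_roots_of_unity b"
proof -
  have pow: "cis (2 * pi / b) ^ k = cis (2 * pi * k / b)" for k
    by (simp add: DeMoivre mult_ac)
  have inj: "inj_on (\<lambda>k. cis (2 * pi * real k / real b)) {..<b}"
    using bij_betw_roots_unity[of b] assms by (simp add: bij_betw_def)
  show ?thesis
    unfolding primitive_roots_of_unity_def
  proof (intro CollectI conjI allI impI)
    show "cis (2 * pi / b) ^ b = 1"
      using assms by (simp add: pow complex_eq_iff)
  next
    fix k
    assume k: "0 < k \<and> k < b"
    then have "cis (2 * pi * k / b) \<noteq> cis (2 * pi * real 0 / b)"
      using inj_onD[OF inj, of k 0] assms by auto
    then show "cis (2 * pi / b) ^ k \<noteq> 1" by (simp add: pow)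
  qed
qed

lemma card_primitive_roots_of_unity_ge_4:
  assumes "4 dvd b" "b \<ge> 8"
  shows "card (primitive_roots_of_unity b) \<ge> 4"
proof -
  define z where "z = cis (2 * pi / b)"
  have b: "b \<ge> 1" using assms by simp
  have z: "z \<in> primitive_roots_of_unity b"
    unfolding z_def using b by (rule cis_primitive_root)
  have "z \<noteq> 0" using z b by (rule primitive_root_nonzero)
  have "z ^ 2 \<noteq> 1" "z ^ 4 \<noteq> 1"
    using primitive_root_pow_eq_1_iff[OF z b] assms(2) by (auto dest: dvd_imp_le)
  moreover have "z ^ 2 = z * z" "z ^ 4 = (z * z) * (z * z)"
    by (simp_all add: eval_nat_numeral)
  ultimately have "z * z \<noteq> 1" "z * z \<noteq> -1"
    by auto
  with \<open>z \<noteq> 0\<close> have "card {z, - z, inverse z, - inverse z} = 4"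
    by (auto simp: field_simps minus_equation_iff[of z] eq_commute[of "- z"])
  moreover have "{z, - z, inverse z, - inverse z} \<subseteq> primitive_roots_of_unity b"
    using z b assms(1) by (simp add: primitive_root_inverse primitive_root_uminus)
  ultimately show ?thesis
    by (metis card_mono finite_primitive_roots_of_unity[OF b])
qed

lemma primitive_roots_of_unity_disjoint:
  assumes "d \<ge> 1" "d' \<ge> 1" "d \<noteq> d'"
  shows "primitive_roots_of_unity d \<inter> primitive_roots_of_unity d' = {}"
proof (rule ccontr)
  assume "primitive_roots_of_unity d \<inter> primitive_roots_of_unity d' \<noteq> {}"
  then obtain z where z: "z \<in> primitive_roots_of_unity d" "z \<in> primitive_roots_of_unity d'"
    by blast
  then have "z ^ d = 1" "z ^ d' = 1" by (simp_all add: primitive_roots_of_unity_def)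
  then have "d dvd d'" "d' dvd d"
    using primitive_root_pow_eq_1_iff[OF z(1) assms(1)] primitive_root_pow_eq_1_iff[OF z(2) assms(2)]
    by simp_all
  with assms(3) show False by (simp add: dvd_antisym)
qed

lemma roots_of_unity_eq_UN_primitive:
  assumes "n \<ge> 1"
  shows "{z::complex. z ^ n = 1} = (\<Union>d\<in>{d. d dvd n}. primitive_roots_of_unity d)"
proof (intro equalityI subsetI)
  fix z :: complex
  assume "z \<in> {z. z ^ n = 1}"
  then have zn: "z ^ n = 1" by simp
  define d where "d = (LEAST k. 0 < k \<and> z ^ k = 1)"
  have d: "0 < d \<and> z ^ d = 1"
    unfolding d_def by (rule LeastI[of _ n]) (use assms zn in simp)
  have "z ^ k \<noteq> 1" if "0 < k" "k < d" for k
    using not_less_Least[of k "\<lambda>k. 0 < k \<and> z ^ k = 1"] that by (simp add: d_def)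
  with d have "z \<in> primitive_roots_of_unity d"
    by (simp add: primitive_roots_of_unity_def)
  moreover from this have "d dvd n"
    using primitive_root_pow_eq_1_iff[of z d n] d zn by simp
  ultimately show "z \<in> (\<Union>d\<in>{d. d dvd n}. primitive_roots_of_unity d)" by blast
next
  fix z
  assume "z \<in> (\<Union>d\<in>{d. d dvd n}. primitive_roots_of_unity d)"
  then obtain d where "d dvd n" "z \<in> primitive_roots_of_unity d" by blast
  moreover from this assms have "d \<ge> 1" by (cases d) auto
  ultimately show "z \<in> {z. z ^ n = 1}" by (simp add: primitive_root_pow_eq_1_iff)
qed

lemma prod_linear_dvd_if_roots:
  fixes p :: "'a::idom poly"
  assumes "finite S" "\<And>z. z \<in> S \<Longrightarrow> poly p z = 0"
  shows "(\<Prod>z\<in>S. [:-z, 1:]) dvd p"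
  using assms
proof (induction S arbitrary: p rule: finite_induct)
  case empty
  then show ?case by simp
next
  case (insert a S)
  then obtain q where q: "p = [:-a, 1:] * q"
    by (metis insertI1 poly_eq_0_iff_dvd dvdE)
  have "poly q z = 0" if "z \<in> S" for z
    using insert.prems[of z] that insert.hyps(2) by (auto simp: q)
  then have "(\<Prod>z\<in>S. [:-z, 1:]) dvd q" by (rule insert.IH)
  then have "[:-a, 1:] * (\<Prod>z\<in>S. [:-z, 1:]) dvd [:-a, 1:] * q"
    by (rule mult_dvd_mono[OF dvd_refl])
  then show ?case by (simp only: prod.insert[OF insert.hyps] q)
qed

lemma degree_prod_linear: "finite S \<Longrightarrow> degree (\<Prod>z\<in>S. [:-z, 1::'a::idom:]) = card S"
  by (simp add: degree_prod_sum_eq)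

lemma lead_coeff_prod_linear: "lead_coeff (\<Prod>z\<in>S. [:-z, 1::'a::idom:]) = 1"
  by (simp add: lead_coeff_prod)

lemma poly_cyclotomic_primitive_root:
  "b \<ge> 1 \<Longrightarrow> z \<in> primitive_roots_of_unity b \<Longrightarrow> poly (cyclotomic b) z = 0"
  by (auto simp: cyclotomic_def poly_prod finite_primitive_roots_of_unity)

lemma cyclotomic_dvd_if_roots:
  "b \<ge> 1 \<Longrightarrow> (\<And>z. z \<in> primitive_roots_of_unity b \<Longrightarrow> poly p z = 0) \<Longrightarrow> cyclotomic b dvd p"
  unfolding cyclotomic_def by (rule prod_linear_dvd_if_roots[OF finite_primitive_roots_of_unity])

lemma degree_cyclotomic: "b \<ge> 1 \<Longrightarrow> degree (cyclotomic b) = card (primitive_roots_of_unity b)"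
  by (simp add: cyclotomic_def degree_prod_linear finite_primitive_roots_of_unity)

lemma lead_coeff_cyclotomic: "lead_coeff (cyclotomic b) = 1"
  by (simp add: cyclotomic_def lead_coeff_prod_linear)

lemma prod_linear_roots_of_unity:
  assumes "n \<ge> 1"
  shows "(\<Prod>z\<in>{z::complex. z ^ n = 1}. [:-z, 1:]) = monom 1 n - 1"
proof -
  let ?P = "\<Prod>z\<in>{z::complex. z ^ n = 1}. [:-z, 1:]"
  have fin: "finite {z::complex. z ^ n = 1}" using assms by (rule finite_roots_unity)
  have "?P dvd monom 1 n - 1"
    by (rule prod_linear_dvd_if_roots[OF fin]) (simp add: poly_monom)
  then obtain q where q: "monom 1 n - 1 = ?P * q" by (elim dvdE)
  have "degree (monom (1::complex) n + - 1) = n"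
    using assms by (subst degree_add_eq_left) (simp_all add: degree_monom_eq)
  then have deg: "degree (monom (1::complex) n - 1) = n" by simp
  then have "q \<noteq> 0" using q assms by auto
  moreover have "?P \<noteq> 0"
    using lead_coeff_prod_linear[of "{z::complex. z ^ n = 1}"] by auto
  moreover have "degree ?P = n"
    using assms by (simp add: degree_prod_linear fin card_roots_unity_eq)
  ultimately have "degree q = 0"
    using deg q by (simp add: degree_mult_eq)
  moreover have "lead_coeff (monom (1::complex) n - 1) = 1"
    using deg assms by simp
  then have "lead_coeff q = 1"
    by (simp add: q lead_coeff_mult lead_coeff_prod_linear)
  ultimately have "q = 1"
    by (metis degree_eq_zeroE lead_coeff_pCons(2) one_pCons)
  with q show ?thesis by simp
qed

lemma monom_minus_1_eq_prod_cyclotomic: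
  assumes "n \<ge> 1"
  shows "monom 1 n - 1 = (\<Prod>d | d dvd n. cyclotomic d)"
proof -
  have pos: "d \<ge> 1" if "d dvd n" for d using assms that by (cases d) auto
  have fin: "finite {d. d dvd n}" using assms by simp
  have "monom 1 n - 1 = (\<Prod>z\<in>(\<Union>d\<in>{d. d dvd n}. primitive_roots_of_unity d). [:-z, 1:])"
    using prod_linear_roots_of_unity[OF assms] roots_of_unity_eq_UN_primitive[OF assms] by simp
  also have "\<dots> = (\<Prod>d | d dvd n. cyclotomic d)"
    unfolding cyclotomic_def using pos
    by (intro prod.UNION_disjoint fin)
      (auto simp: finite_primitive_roots_of_unity primitive_roots_of_unity_disjoint)
  finally show ?thesis .
qed

lemma coeff_0_cyclotomic: "coeff (cyclotomic b) 0 = (\<Prod>z\<in>primitive_roots_of_unity b. - z)"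
  by (simp add: cyclotomic_def poly_0_coeff_0 [symmetric] poly_prod)

lemma coeff_0_cyclotomic_nonzero: "b \<ge> 1 \<Longrightarrow> coeff (cyclotomic b) 0 \<noteq> 0"
  by (simp add: coeff_0_cyclotomic finite_primitive_roots_of_unity primitive_root_nonzero)

lemma norm_coeff_0_cyclotomic:
  assumes "b \<ge> 1"
  shows "norm (coeff (cyclotomic b) 0) = 1"
proof -
  have "norm z = 1" if "z \<in> primitive_roots_of_unity b" for z
  proof -
    from that have "norm z ^ b = 1"
      by (simp add: primitive_roots_of_unity_def flip: norm_power)
    with assms show ?thesis using power_eq_imp_eq_base[of "norm z" b 1] by simp
  qed
  then show ?thesis by (simp add: coeff_0_cyclotomic prod_norm [symmetric])
qed

lemma poly_cyclotomic: "poly (cyclotomic b) x = (\<Prod>z\<in>primitive_roots_of_unity b. x - z)"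
  unfolding cyclotomic_def poly_prod by (rule prod.cong) simp_all

lemma poly_cyclotomic_uminus:
  assumes "b \<ge> 1" "4 dvd b"
  shows "poly (cyclotomic b) (- x) = (-1) ^ card (primitive_roots_of_unity b) * poly (cyclotomic b) x"
proof -
  let ?Z = "primitive_roots_of_unity b"
  have "uminus ` ?Z = ?Z"
    using primitive_root_uminus[OF _ assms(1,2)] by (auto intro: image_eqI[of _ uminus "- _"])
  then have "bij_betw uminus ?Z ?Z" by (simp add: bij_betw_def)
  have "poly (cyclotomic b) (- x) = (\<Prod>z\<in>?Z. (-1) * (x - (- z)))"
    unfolding poly_cyclotomic by (rule prod.cong) simp_all
  also have "\<dots> = (-1) ^ card ?Z * (\<Prod>z\<in>?Z. x - (- z))"
    by (simp only: prod.distrib prod_constant)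
  also have "(\<Prod>z\<in>?Z. x - (- z)) = (\<Prod>z\<in>?Z. x - z)"
    using prod.reindex_bij_betw[OF \<open>bij_betw uminus ?Z ?Z\<close>, of "\<lambda>z. x - z"] by simp
  finally show ?thesis by (simp only: poly_cyclotomic)
qed

lemma coeff_cyclotomic_odd:
  assumes "b \<ge> 1" "4 dvd b" "odd n"
  shows "coeff (cyclotomic b) n = 0"
proof -
  let ?N = "card (primitive_roots_of_unity b)"
  have "poly (pcompose (cyclotomic b) [:0, -1:]) = poly (smult ((-1) ^ ?N) (cyclotomic b))"
    by (simp add: fun_eq_iff poly_pcompose poly_cyclotomic_uminus[OF assms(1,2)])
  then have "pcompose (cyclotomic b) [:0, -1:] = smult ((-1) ^ ?N) (cyclotomic b)"
    by (simp add: poly_eq_poly_eq_iff)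
  then have coeff: "(-1) ^ k * coeff (cyclotomic b) k = (-1) ^ ?N * coeff (cyclotomic b) k" for k
    by (metis coeff_pcompose_linear coeff_smult)
  from coeff[of 0] coeff_0_cyclotomic_nonzero[OF assms(1)] have "(-1 :: complex) ^ ?N = 1"
    by simp
  with coeff[of n] assms(3) show ?thesis by simp
qed

section \<open>Integer polynomials\<close>

lemma map_poly_of_int_add [simp]:
    "map_poly (of_int :: int \<Rightarrow> 'a::comm_ring_1) (p + q) = map_poly of_int p + map_poly of_int q"
  and map_poly_of_int_diff [simp]:
    "map_poly (of_int :: int \<Rightarrow> 'a) (p - q) = map_poly of_int p - map_poly of_int q"
  and map_poly_of_int_mult [simp]:
    "map_poly (of_int :: int \<Rightarrow> 'a) (p * q) = map_poly of_int p * map_poly of_int q"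
  by (rule poly_eqI; simp add: coeff_map_poly coeff_mult)+

lemma map_poly_of_int_power [simp]:
  "map_poly (of_int :: int \<Rightarrow> 'a::comm_ring_1) (p ^ n) = map_poly of_int p ^ n"
  by (induction n) simp_all

lemma map_poly_of_int_numeral [simp]:
  "map_poly (of_int :: int \<Rightarrow> 'a::comm_ring_1) (numeral n) = numeral n"
  by (simp add: numeral_poly map_poly_pCons)

lemma map_poly_of_int_prod:
  "map_poly (of_int :: int \<Rightarrow> 'a::comm_ring_1) (prod f A) = (\<Prod>x\<in>A. map_poly of_int (f x))"
  by (induction A rule: infinite_finite_induct) simp_all

lemma map_poly_of_int_eq_iff [simp]:
  "map_poly (of_int :: int \<Rightarrow> 'a::{comm_ring_1, ring_char_0}) p = map_poly of_int q \<longleftrightarrow> p = q"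
  by (auto simp: poly_eq_iff coeff_map_poly)

lemma dvd_if_map_poly_of_int_dvd:
  fixes P F :: "int poly"
  assumes monic: "lead_coeff P = 1"
    and dvd: "map_poly (of_int :: int \<Rightarrow> 'a::{idom, ring_char_0}) P dvd map_poly of_int F"
  shows "P dvd F"
proof -
  let ?map = "map_poly (of_int :: int \<Rightarrow> 'a)"
  have "P \<noteq> 0" using monic by auto
  obtain q r where "pseudo_divmod F P = (q, r)" by fastforce
  with monic pseudo_divmod[OF \<open>P \<noteq> 0\<close> this]
  have F: "F = P * q + r" and r: "r = 0 \<or> degree r < degree P" by auto
  from dvd obtain K where K: "?map F = ?map P * K" by (elim dvdE)
  have mr: "?map r = ?map P * (K - ?map q)"
    using arg_cong[OF F, of ?map] K by (simp add: algebra_simps)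
  have "r = 0"
  proof (rule ccontr)
    assume "r \<noteq> 0"
    then have "?map r \<noteq> 0" using map_poly_of_int_eq_iff[of r 0] by simp
    moreover have "?map P \<noteq> 0" using \<open>P \<noteq> 0\<close> map_poly_of_int_eq_iff[of P 0] by simp
    ultimately have "degree (?map P) \<le> degree (?map r)"
      by (simp add: mr degree_mult_eq)
    then have "degree P \<le> degree r" by (simp add: degree_map_poly)
    with r \<open>r \<noteq> 0\<close> show False by simp
  qed
  with F show ?thesis by simp
qed

lemma int_poly_quotient_by_monic:
  fixes F Q :: "int poly" and A :: "'a::{idom, ring_char_0} poly"
  assumes "map_poly of_int F = A * map_poly of_int Q" "lead_coeff Q = 1"
  obtains R where "A = map_poly of_int R"
proof -
  from assms(1) have "map_poly of_int Q dvd map_poly (of_int :: int \<Rightarrow> 'a) F" by simp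
  then have "Q dvd F" by (rule dvd_if_map_poly_of_int_dvd[OF assms(2)])
  then obtain R where R: "F = Q * R" by (elim dvdE)
  have "map_poly of_int Q \<noteq> (0 :: 'a poly)"
    using assms(2) map_poly_of_int_eq_iff[of Q 0] by auto
  moreover have "map_poly of_int Q * A = map_poly of_int Q * map_poly (of_int :: int \<Rightarrow> 'a) R"
    using assms(1) R by (metis map_poly_of_int_mult mult.commute)
  ultimately show ?thesis using that by simp
qed

lemma cyclotomic_int_poly:
  assumes "b \<ge> 1"
  shows "\<exists>P. cyclotomic b = map_poly of_int P \<and> lead_coeff P = 1"
  using assms
proof (induction b rule: less_induct)
  case (less n)
  define D where "D = {d. d dvd n \<and> d < n}"
  have "\<forall>d\<in>D. \<exists>P. cyclotomic d = map_poly of_int P \<and> lead_coeff P = 1"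
    using less by (auto simp: D_def intro!: less.IH dest: dvd_pos_nat[rotated])
  then obtain P where P: "\<And>d. d \<in> D \<Longrightarrow> cyclotomic d = map_poly of_int (P d) \<and> lead_coeff (P d) = 1"
    by metis
  define Q where "Q = (\<Prod>d\<in>D. P d)"
  have "finite D" using less.prems by (simp add: D_def)
  have map_Q: "map_poly of_int Q = (\<Prod>d\<in>D. cyclotomic d)"
    unfolding Q_def map_poly_of_int_prod using P by (intro prod.cong) auto
  have lead_Q: "lead_coeff Q = 1"
    unfolding Q_def lead_coeff_prod using P by simp
  have "{d. d dvd n} = insert n D"
    using less.prems by (auto simp: D_def dvd_imp_le le_neq_implies_less)
  then have "map_poly of_int (monom 1 n - 1) = cyclotomic n * map_poly of_int Q"
    using monom_minus_1_eq_prod_cyclotomic[OF less.prems] \<open>finite D\<close>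
    by (simp add: map_Q D_def map_poly_monom)
  then obtain R where R: "cyclotomic n = map_poly of_int R"
    using lead_Q by (rule int_poly_quotient_by_monic)
  moreover have "of_int (lead_coeff R) = (1 :: complex)"
    using lead_coeff_cyclotomic[of n] by (simp add: R coeff_map_poly degree_map_poly)
  ultimately show ?case by auto
qed

section \<open>Polynomials over GF(2)\<close>

text \<open>As Field_as_Ring does for the real numbers: this makes polynomials over \<^typ>\<open>bit\<close> a
  Euclidean ring with gcds, so that the library theory of coprimality and congruences applies.\<close>

instantiation bit ::
  "{unique_euclidean_ring, normalization_euclidean_semiring, normalization_semidom_multiplicative}"
begin

definition [simp]: "normalize_bit (x :: bit) = x"
definition [simp]: "unit_factor_bit (x :: bit) = x"
definition [simp]: "euclidean_size_bit (x :: bit) = (if x = 0 then 0 else 1 :: nat)"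
definition [simp]: "division_segment (x :: bit) = 1"

instance
  by standard (auto simp: dvd_field_iff modulo_bit_def)

end

instantiation bit :: euclidean_ring_gcd
begin

definition "gcd_bit = (Euclidean_Algorithm.gcd :: bit \<Rightarrow> _)"
definition "lcm_bit = (Euclidean_Algorithm.lcm :: bit \<Rightarrow> _)"
definition "Gcd_bit = (Euclidean_Algorithm.Gcd :: bit set \<Rightarrow> _)"
definition "Lcm_bit = (Euclidean_Algorithm.Lcm :: bit set \<Rightarrow> _)"

instance
  by standard (simp_all add: gcd_bit_def lcm_bit_def Gcd_bit_def Lcm_bit_def)

end

instance bit :: field_gcd ..

definition X :: "bit poly" where
  "X = [:0, 1:]"

lemma X_neq_0 [simp]: "X \<noteq> 0"
  and degree_X [simp]: "degree X = 1"
  by (simp_all add: X_def)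

lemma pCons_eq_const_plus_X_mult: "pCons c p = [:c:] + X * p"
  by (simp add: X_def)

lemma bit_poly_two_eq_0 [simp]: "(2 :: bit poly) = 0"
  by (simp add: numeral_poly)

lemma bit_poly_add_self [simp]: "p + p = (0 :: bit poly)"
  by (simp flip: mult_2)

lemma bit_poly_uminus [simp]: "- p = (p :: bit poly)"
  by (rule minus_unique) simp

lemma bit_poly_diff_eq_add: "p - q = p + (q :: bit poly)"
  by (simp only: diff_conv_add_uminus bit_poly_uminus)

lemma bit_poly_eq_iff_add_eq_0: "p = q \<longleftrightarrow> p + q = (0 :: bit poly)"
  using eq_neg_iff_add_eq_0[of p q] by simp

lemma bit_poly_power2_add: "(p + q) ^ 2 = p ^ 2 + (q :: bit poly) ^ 2"
  by (simp add: power2_sum)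

lemma bit_poly_even_odd_decomp:
  obtains a b where "f = a ^ 2 + X * b ^ 2"
proof (induction f arbitrary: thesis rule: pCons_induct)
  case 0
  then show ?case by (metis add_0 mult_zero_right power_zero_numeral)
next
  case (pCons c f)
  then obtain a b where f: "f = a ^ 2 + X * b ^ 2" by blast
  have c: "[:c:] ^ 2 = [:c:]"
    by (cases c) (simp_all flip: one_pCons)
  have "pCons c f = [:c:] ^ 2 + X * (a ^ 2 + X * b ^ 2)"
    unfolding c f by (rule pCons_eq_const_plus_X_mult)
  also have "\<dots> = ([:c:] + X * b) ^ 2 + X * a ^ 2"
    by (simp only: bit_poly_power2_add) (simp only: power2_eq_square ring_distribs ac_simps)
  finally show ?case by (rule pCons.prems)
qed

lemma bit_poly_even_odd_unique:
  assumes "a ^ 2 + X * b ^ 2 = c ^ 2 + X * d ^ 2"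
  shows "a = c" "b = d"
proof -
  have "(a + c) ^ 2 + X * (b + d) ^ 2 = (a ^ 2 + X * b ^ 2) + (c ^ 2 + X * d ^ 2)"
    by (simp only: bit_poly_power2_add distrib_left ac_simps)
  also have "\<dots> = 0"
    using assms bit_poly_eq_iff_add_eq_0 by blast
  finally have sq: "(a + c) ^ 2 = X * (b + d) ^ 2"
    by (rule bit_poly_eq_iff_add_eq_0[THEN iffD2])
  \<comment> \<open>a square has even degree, X times a nonzero square odd degree\<close>
  have "b + d = 0"
  proof (rule ccontr)
    assume "b + d \<noteq> 0"
    then have "degree ((a + c) ^ 2) = 1 + 2 * degree (b + d)"
      by (simp add: sq degree_power_eq degree_mult_eq)
    then have "2 * degree (a + c) = 1 + 2 * degree (b + d)"
      by (cases "a + c = 0") (simp_all add: degree_power_eq)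
    then show False by presburger
  qed
  moreover from this sq have "a + c = 0" by simp
  ultimately show "a = c" "b = d"
    by (simp_all only: bit_poly_eq_iff_add_eq_0[symmetric])
qed

lemma square_dvd_even_odd_decomp:
  assumes "e ^ 2 dvd a ^ 2 + X * b ^ 2"
  shows "e dvd a" "e dvd b"
proof -
  from assms obtain q where "a ^ 2 + X * b ^ 2 = e ^ 2 * q" by (elim dvdE)
  moreover obtain q1 q2 where "q = q1 ^ 2 + X * q2 ^ 2" by (rule bit_poly_even_odd_decomp)
  ultimately have "a ^ 2 + X * b ^ 2 = (e * q1) ^ 2 + X * (e * q2) ^ 2"
    by (simp add: algebra_simps)
  then have "a = e * q1" "b = e * q2" by (rule bit_poly_even_odd_unique)+
  then show "e dvd a" "e dvd b" by simp_all
qed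

lemma bit_poly_square_if_odd_coeffs_zero:
  assumes "\<And>n. odd n \<Longrightarrow> coeff f n = 0"
  obtains e where "f = (e :: bit poly) ^ 2"
proof -
  obtain a b where f: "f = a ^ 2 + X * b ^ 2" by (rule bit_poly_even_odd_decomp)
  have "pderiv f = 0"
  proof (rule poly_eqI)
    fix n
    show "coeff (pderiv f) n = coeff 0 n"
    proof (cases "even n")
      case True
      with assms show ?thesis by (simp add: coeff_pderiv)
    next
      case False
      then have "even (Suc n)" by simp
      then obtain k where "Suc n = 2 * k" by (rule evenE)
      then show ?thesis by (simp add: coeff_pderiv)
    qed
  qed
  moreover have "pderiv (p ^ 2) = 0" for p :: "bit poly"
    by (simp add: pderiv_power)
  then have "pderiv f = b ^ 2"
    by (simp add: f pderiv_add pderiv_mult X_def pderiv_pCons)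
  ultimately show ?thesis using f that by simp
qed

lemma bezout_imp_coprime:
  assumes "u * a + v * b = 1"
  shows "coprime a b"
proof (rule coprimeI)
  fix c
  assume "c dvd a" "c dvd b"
  then have "c dvd u * a + v * b" by simp
  then show "is_unit c" by (simp add: assms)
qed

lemma coprime_linear_poly_iff:
  fixes p :: "'a::field_gcd poly"
  shows "coprime p [:-a, 1:] \<longleftrightarrow> poly p a \<noteq> 0"
proof -
  have prime: "prime_elem [:-a, 1:]" by (simp add: prime_elem_linear_field_poly)
  have "coprime p [:-a, 1:] \<longleftrightarrow> \<not> [:-a, 1:] dvd p"
  proof
    assume "coprime p [:-a, 1:]"
    show "\<not> [:-a, 1:] dvd p"
    proof
      assume "[:-a, 1:] dvd p"
      with \<open>coprime p [:-a, 1:]\<close> have "is_unit [:-a, 1:]"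
        by (rule coprime_common_divisor) simp
      with prime show False by (simp add: prime_elem_not_unit)
    qed
  next
    assume "\<not> [:-a, 1:] dvd p"
    with prime have "coprime [:-a, 1:] p"
      by (rule prime_elem_imp_coprime)
    then show "coprime p [:-a, 1:]"
      by (simp add: coprime_commute)
  qed
  then show ?thesis by (simp add: poly_eq_0_iff_dvd)
qed

lemma linear_power_dvd_if_dvd_linear_power:
  fixes a :: "'a::field_gcd poly"
  assumes "a dvd [:c, 1:] ^ n"
  shows "[:c, 1:] ^ degree a dvd a"
proof -
  have "prime [:c, 1:]"
    by (simp add: prime_def prime_elem_linear_field_poly normalize_poly_eq_map_poly)
  then obtain m where m: "normalize a = [:c, 1:] ^ m"
    using divides_primepow assms by blast
  have "a \<noteq> 0" using assms by auto
  then have "degree (normalize a) \<le> degree a" "degree a \<le> degree (normalize a)"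
    by (simp_all add: dvd_imp_degree_le)
  then have "degree a = m" by (simp add: m degree_linear_power)
  then show ?thesis by (metis m dvd_normalize_iff dvd_refl)
qed

section \<open>The polynomial R_t modulo 2\<close>

definition R_form :: "'a::comm_ring_1 \<Rightarrow> 'a \<Rightarrow> 'a \<Rightarrow> 'a" where
  "R_form x w v = w^2*x^15 + w^2*x^14 + w^2*x^11 - w^2*x^10 - w^2*x^8 + 2*w*v*x^9 - w*x^15
     - w*x^11 - w*x^9 + 2*w*x^8 - 2*w*x^7 + w*x^6 + w*x^4 + w - 2*v*x^6 + x^7 + x^5 - x^4 - x - 1"

definition A_form :: "'a::comm_ring_1 \<Rightarrow> 'a \<Rightarrow> 'a" where
  "A_form x y = x^4 * (x^3 + x + 1) * y^2 + (x^3 + x^2 + 1) * y + (x^2 + 1)"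

definition B_form :: "'a::comm_ring_1 \<Rightarrow> 'a \<Rightarrow> 'a" where
  "B_form x y = x^5 * (x^2 + 1) * y^2 + x^4 * (x^3 + x + 1) * y + (x^3 + x^2 + 1)"

definition G_form :: "'a::comm_ring_1 \<Rightarrow> 'a" where
  "G_form x = x^12 + x^10 + x^9 + x^8 + x^6 + x^4 + x^3 + x^2 + 1"

lemma poly_R_poly: "poly (R_poly t) z = R_form z (z ^ (4 * t)) (z ^ (2 * t))"
  unfolding R_poly_def R_form_def by (simp add: poly_monom power_add power_mult algebra_simps)

text \<open>The identities in characteristic 2 below are proved as ring identities with an explicit
  multiple of 2 as correction term.\<close>

lemma R_form_char_2:
  fixes x y :: "'a::idom"
  assumes "(2 :: 'a) = 0"
  shows "R_form x (y^2) y = A_form x y ^ 2 + x * B_form x y ^ 2"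
proof -
  have "R_form x (y^2) y + 2*(1 + y + x + x^2 + 2*x^2*y + x^2*y^2 + x^3 + x^3*y + x^3*y^2
      + 2*x^4 + x^4*y + x^4*y^2 + x^4*y^3 + 2*x^5*y + 2*x^5*y^2 + x^5*y^3 + x^6 + 2*x^6*y
      + 2*x^6*y^2 + x^6*y^3 + x^7*y + 3*x^7*y^2 + 3*x^7*y^3 + 3*x^8*y + x^8*y^2 + x^8*y^3
      + x^8*y^4 + x^9*y + 3*x^9*y^2 + x^9*y^4 + x^10*y + 2*x^10*y^2 + 2*x^10*y^3 + x^10*y^4
      + x^11*y + 2*x^11*y^2 + x^11*y^3 + x^11*y^4 + x^12*y^2 + x^12*y^3 + x^12*y^4 + x^13*y^2
      + 2*x^13*y^3 + x^13*y^4 + x^15*y^2 + x^15*y^3)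
    = A_form x y ^ 2 + x * B_form x y ^ 2"
    unfolding R_form_def A_form_def B_form_def by algebra
  with assms show ?thesis by simp
qed

lemma R_form_1_char_2:
  fixes x v :: "'a::idom"
  assumes "(2 :: 'a) = 0"
  shows "R_form x 1 v = (x + 1)^4 * (1 + x^2 + x^3 + x^4 + x^5 + x^10) + (x + 1)^3"
proof -
  have "R_form x 1 v + 2*(1 + 4*x + 5*x^2 + 5*x^3 + 6*x^4 + 7*x^5 + 7*x^6 + x^6*v + 6*x^7
      + 2*x^8 + x^9 - x^9*v + x^10 + 2*x^11 + 3*x^12 + 2*x^13)
    = (x + 1)^4 * (1 + x^2 + x^3 + x^4 + x^5 + x^10) + (x + 1)^3"
    unfolding R_form_def power_one mult_1_left mult_1_right by algebra
  with assms show ?thesis by simp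
qed

definition quadratic_resultant :: "'a::comm_ring_1 \<Rightarrow> 'a \<Rightarrow> 'a \<Rightarrow> 'a \<Rightarrow> 'a \<Rightarrow> 'a \<Rightarrow> 'a" where
  "quadratic_resultant a2 a1 a0 b2 b1 b0 =
     (a2*b0 - a0*b2)^2 - (a2*b1 - a1*b2) * (a1*b0 - a0*b1)"

lemma dvd_quadratic_resultant:
  fixes a2 a1 a0 b2 b1 b0 y d :: "'a::comm_ring_1"
  assumes "d dvd a2*y^2 + a1*y + a0" "d dvd b2*y^2 + b1*y + b0"
  shows "d dvd quadratic_resultant a2 a1 a0 b2 b1 b0"
proof -
  have "quadratic_resultant a2 a1 a0 b2 b1 b0 =
      ((a2*b1 - a1*b2)*b2*y + (a2*b1 - a1*b2)*b1 - (a2*b0 - a0*b2)*b2) * (a2*y^2 + a1*y + a0)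
    + ((a2*b0 - a0*b2)*a2 - (a2*b1 - a1*b2)*a2*y - (a2*b1 - a1*b2)*a1) * (b2*y^2 + b1*y + b0)"
    unfolding quadratic_resultant_def by (simp add: algebra_simps power2_eq_square)
  with assms show ?thesis by simp
qed

lemma dvd_resultant_if_dvd_A_form_B_form:
  fixes x y d :: "'a::idom"
  assumes "(2 :: 'a) = 0" "d dvd A_form x y" "d dvd B_form x y"
  shows "d dvd x^5 * (x + 1)^6 * G_form x"
proof -
  let ?a2 = "x^4 * (x^3 + x + 1)" and ?a1 = "x^3 + x^2 + 1" and ?a0 = "x^2 + 1"
  let ?b2 = "x^5 * (x^2 + 1)" and ?b1 = "x^4 * (x^3 + x + 1)" and ?b0 = "x^3 + x^2 + 1"
  have "quadratic_resultant ?a2 ?a1 ?a0 ?b2 ?b1 ?b0 + 2*(3*x^6 + 6*x^7 + 12*x^8 + 17*x^9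
      + 20*x^10 + 27*x^11 + 24*x^12 + 20*x^13 + 22*x^14 + 20*x^15 + 24*x^16 + 27*x^17 + 20*x^18
      + 17*x^19 + 12*x^20 + 6*x^21 + 3*x^22)
    = x^5 * (x + 1)^6 * G_form x"
    unfolding quadratic_resultant_def G_form_def by algebra
  moreover have "d dvd quadratic_resultant ?a2 ?a1 ?a0 ?b2 ?b1 ?b0"
    using assms(2,3) unfolding A_form_def B_form_def by (rule dvd_quadratic_resultant)
  ultimately show ?thesis using assms(1) by simp
qed

lemma G_form_dvd_X_pow_65: "G_form X dvd X^65 - 1"
proof -
  have "X^65 + 1 + 2*(X^2 + X^3 + X^4 + X^5 + 2*X^6 + X^7 + 2*X^8 + 2*X^9 + 3*X^10 + 2*X^11
      + 3*X^12 + 2*X^13 + 2*X^14 + 2*X^15 + 3*X^16 + 2*X^17 + 2*X^18 + 3*X^19 + 2*X^20 + 2*X^21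
      + 2*X^22 + 2*X^23 + X^24 + 3*X^25 + X^26 + 2*X^27 + 2*X^28 + 2*X^29 + X^30 + 2*X^31 + X^32
      + X^33 + 2*X^34 + X^35 + 2*X^36 + 2*X^37 + 2*X^38 + X^39 + 3*X^40 + X^41 + 2*X^42 + 2*X^43
      + 2*X^44 + 2*X^45 + 3*X^46 + 2*X^47 + 2*X^48 + 3*X^49 + 2*X^50 + 2*X^51 + 2*X^52 + 3*X^53
      + 2*X^54 + 3*X^55 + 2*X^56 + 2*X^57 + X^58 + 2*X^59 + X^60 + X^61 + X^62 + X^63)
    = G_form X * (1 + X^2 + X^3 + X^6 + X^7 + X^8 + X^10 + X^13 + X^16 + X^17 + X^19 + X^21
      + X^25 + X^28 + X^32 + X^34 + X^36 + X^37 + X^40 + X^43 + X^45 + X^46 + X^47 + X^50 + X^51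
      + X^53)"
    unfolding G_form_def by algebra
  then show ?thesis by (simp add: bit_poly_diff_eq_add)
qed

lemma X_pow_cong_mod_G_form:
  assumes "j mod 65 = 3"
  shows "[X^j = X^3] (mod G_form X)"
proof -
  have "[X^65 = 1] (mod G_form X)"
    using G_form_dvd_X_pow_65 by (simp add: cong_iff_dvd_diff)
  then have "[(X^65)^(j div 65) * X^3 = 1^(j div 65) * X^3] (mod G_form X)"
    by (intro cong_mult cong_pow cong_refl)
  moreover have "X^j = (X^65)^(j div 65) * X^3"
    by (metis assms div_mult_mod_eq mult.commute power_add power_mult)
  ultimately show ?thesis by (simp only: power_one mult_1_left)
qed

lemma coprime_X_pow_3_plus_1_G_form: "coprime (X^3 + 1) (G_form X)"
proof (rule bezout_imp_coprime)
  have "(X^2 + X^3 + X^4 + X^5 + X^7 + X^9) * (X^3 + 1) + 1 * G_form X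
      = 1 + 2*(X^2 + X^3 + X^4 + X^5 + X^6 + X^7 + X^8 + X^9 + X^10 + X^12)"
    unfolding G_form_def by algebra
  then show "(X^2 + X^3 + X^4 + X^5 + X^7 + X^9) * (X^3 + 1) + 1 * G_form X = 1" by simp
qed

lemma coprime_G_form_X_pow_3_G_form: "coprime (G_form (X^3)) (G_form X)"
proof (rule bezout_imp_coprime)
  let ?u = "1 + X + X^2 + X^4 + X^7 + X^11 + X^13 + X^15 + X^16 + X^17 + X^19 + X^22 + X^23
    + X^26 + X^27 + X^28 + X^29 + X^30 + X^31 + X^32 + X^33"
  have "(X + X^6 + X^8 + X^9) * G_form (X^3) + ?u * G_form X = 1 + 2*(X + X^2 + X^3 + 2*X^4
      + X^5 + 2*X^6 + 2*X^7 + 2*X^8 + 2*X^9 + 3*X^10 + 2*X^11 + 2*X^12 + 3*X^13 + 2*X^14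
      + 3*X^15 + 2*X^16 + 3*X^17 + 2*X^18 + 4*X^19 + 2*X^20 + 3*X^21 + 2*X^22 + 3*X^23 + 2*X^24
      + 4*X^25 + 3*X^26 + 3*X^27 + 3*X^28 + 3*X^29 + 3*X^30 + 4*X^31 + 4*X^32 + 4*X^33 + 3*X^34
      + 4*X^35 + 4*X^36 + 3*X^37 + 3*X^38 + 3*X^39 + 2*X^40 + 2*X^41 + 2*X^42 + X^43 + X^44
      + X^45)"
    unfolding G_form_def by algebra
  then show "(X + X^6 + X^8 + X^9) * G_form (X^3) + ?u * G_form X = 1" by simp
qed

lemma coprime_G_form_resultant:
  assumes "j mod 65 = 3"
  shows "coprime (G_form X) ((X^j)^5 * (X^j + 1)^6 * G_form (X^j))"
proof -
  let ?G = "G_form X"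
  have Xj: "[X^3 = X^j] (mod ?G)"
    using X_pow_cong_mod_G_form[OF assms] by (rule cong_sym)
  have "coprime ?G X"
    using coprime_linear_poly_iff[of ?G 0] by (simp add: X_def G_form_def)
  moreover have "[X^3 + 1 = X^j + 1] (mod ?G)"
    using Xj by (intro cong_add cong_refl)
  then have "coprime (X^j + 1) ?G"
    by (rule cong_imp_coprime) (rule coprime_X_pow_3_plus_1_G_form)
  moreover have "[G_form (X^3) = G_form (X^j)] (mod ?G)"
    unfolding G_form_def[of "X^j"] G_form_def[of "X^3"] using Xj
    by (intro cong_add cong_pow cong_refl)
  then have "coprime (G_form (X^j)) ?G"
    by (rule cong_imp_coprime) (rule coprime_G_form_X_pow_3_G_form)
  ultimately show ?thesis
    by (simp add: coprime_commute)
qed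

lemma dvd_resultant_if_square_dvd_R_form:
  fixes e :: "bit poly"
  assumes "coprime e X" "odd j" "e^2 dvd R_form (X^j) ((X^j)^(4*t)) ((X^j)^(2*t))"
  shows "e dvd (X^j)^5 * (X^j + 1)^6 * G_form (X^j)"
proof -
  define y where "y = (X^j)^(2*t)"
  obtain k where j: "j = 2*k + 1" using assms(2) by (rule oddE)
  have "(X^j)^(4*t) = y^2"
    by (simp add: y_def flip: power_mult) (simp add: mult_ac)
  moreover have "X^j * B_form (X^j) y ^ 2 = X * (X^k * B_form (X^j) y) ^ 2"
    by (simp add: j power_mult_distrib power_add flip: power_mult) (simp add: mult.commute)
  ultimately have "e^2 dvd A_form (X^j) y ^ 2 + X * (X^k * B_form (X^j) y) ^ 2"
    using assms(3) R_form_char_2[of "X^j" y] by (simp add: y_def)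
  then have "e dvd A_form (X^j) y" "e dvd X^k * B_form (X^j) y"
    by (rule square_dvd_even_odd_decomp)+
  moreover from assms(1) have "coprime e (X^k)" by simp
  ultimately have "e dvd A_form (X^j) y" "e dvd B_form (X^j) y"
    by (simp_all add: coprime_dvd_mult_right_iff)
  then show ?thesis by (rule dvd_resultant_if_dvd_A_form_B_form[OF bit_poly_two_eq_0])
qed

lemma not_X_plus_1_pow_4_dvd_R_form: "\<not> (X + 1)^4 dvd R_form X (X^(4*t)) (X^(2*t))"
proof
  let ?m = "(X + 1)^4"
  assume dvd: "?m dvd R_form X (X^(4*t)) (X^(2*t))"
  have "?m = ((X + 1)^2)^2"
    by (simp flip: power_mult)
  also have "\<dots> = X^4 + 1"
    by (simp add: bit_poly_power2_add flip: power_mult)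
  finally have "?m = X^4 + 1" .
  then have "[X^4 = 1] (mod ?m)"
    by (simp add: cong_iff_dvd_diff bit_poly_diff_eq_add)
  then have "[(X^4)^t = 1^t] (mod ?m)"
    by (rule cong_pow)
  then have "[X^(4*t) = 1] (mod ?m)"
    by (simp add: power_mult)
  then have "[R_form X (X^(4*t)) (X^(2*t)) = R_form X 1 (X^(2*t))] (mod ?m)"
    unfolding R_form_def by (intro cong_add cong_diff cong_mult cong_pow cong_refl)
  with dvd have "?m dvd R_form X 1 (X^(2*t))"
    using cong_dvd_iff by blast
  then have "?m dvd (X + 1)^3"
    by (simp add: R_form_1_char_2 dvd_add_right_iff)
  then have "degree ?m \<le> degree ((X + 1)^3)"
    by (rule dvd_imp_degree_le) (simp add: X_def one_pCons)
  then show False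
    by (simp add: X_def degree_power_eq one_pCons)
qed

lemma R_form_no_common_square_divisor:
  fixes e :: "bit poly"
  assumes "coprime e X" "degree e \<ge> 2" "odd j" "j mod 65 = 3"
    and "e^2 dvd R_form X (X^(4*t)) (X^(2*t))"
    and "e^2 dvd R_form (X^j) ((X^j)^(4*t)) ((X^j)^(2*t))"
  shows False
proof -
  have "e dvd X^5 * (X + 1)^6 * G_form X"
    using dvd_resultant_if_square_dvd_R_form[of e 1] assms(1,5) by simp
  moreover have "coprime e (G_form X)"
    using dvd_resultant_if_square_dvd_R_form[OF assms(1,3,6)] dvd_refl
      coprime_G_form_resultant[OF assms(4), unfolded coprime_commute[of "G_form X"]]
    by (rule coprime_divisors)
  ultimately have "e dvd (X + 1)^6"
    using assms(1) by (simp add: coprime_dvd_mult_left_iff coprime_dvd_mult_right_iff)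
  then have "(X + 1)^degree e dvd e"
    using linear_power_dvd_if_dvd_linear_power[of e 1 6] by (simp add: X_def one_pCons)
  then have "(X + 1)^2 dvd e"
    using le_imp_power_dvd[OF assms(2)] by (rule dvd_trans[rotated])
  then have "((X + 1)^2)^2 dvd e^2"
    by (rule dvd_power_same)
  then have "(X + 1)^4 dvd e^2"
    by (simp flip: power_mult)
  with assms(5) show False
    using not_X_plus_1_pow_4_dvd_R_form dvd_trans by blast
qed

lemma exists_coprime_in_residue_class:
  fixes a m n :: nat
  assumes "coprime a m" "n > 0"
  obtains j where "j mod m = a mod m" "coprime j n"
proof
  define s where "s = \<Prod>{p \<in> prime_factors n. \<not> p dvd a}"
  \<comment> \<open>a prime factor of n dividing a divides neither m nor s; any other one divides s but not a\<close>
  show "(a + m * s) mod m = a mod m" by simp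
  show "coprime (a + m * s) n"
  proof (rule coprimeI)
    fix c
    assume c: "c dvd a + m * s" "c dvd n"
    show "is_unit c"
    proof (rule ccontr)
      assume "\<not> is_unit c"
      then obtain p where p: "prime p" "p dvd c" using prime_factor_nat by auto
      with c assms(2) have "p dvd a + m * s" "p \<in> prime_factors n"
        by (auto intro: dvd_trans simp: in_prime_factors_iff)
      have "p dvd s \<longleftrightarrow> \<not> p dvd a"
      proof
        assume "p dvd s"
        then obtain q where "q \<in> prime_factors n" "\<not> q dvd a" "p dvd q"
          using p(1) by (auto simp: s_def prime_dvd_prod_iff)
        with p(1) show "\<not> p dvd a" by (metis in_prime_factors_imp_prime primes_dvd_imp_eq)
      next
        assume "\<not> p dvd a"
        with \<open>p \<in> prime_factors n\<close> show "p dvd s"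
          unfolding s_def by (intro dvd_prodI) auto
      qed
      moreover have "\<not> (p dvd a \<and> p dvd m)"
        using p(1) assms(1) coprime_common_divisor not_prime_unit by blast
      ultimately have "p dvd a \<longleftrightarrow> \<not> p dvd m * s"
        using p(1) by (auto simp: prime_dvd_mult_iff)
      with \<open>p dvd a + m * s\<close> show False
        by (cases "p dvd a") (simp_all add: dvd_add_right_iff dvd_add_left_iff)
    qed
  qed
qed

lemma poly_R_form:
  "poly (R_form a w v) z = R_form (poly a z) (poly w z) (poly v z)"
  by (simp add: R_form_def)

lemma map_poly_of_int_R_form:
  "map_poly (of_int :: int \<Rightarrow> 'a::comm_ring_1) (R_form a w v)
     = R_form (map_poly of_int a) (map_poly of_int w) (map_poly of_int v)"
  by (simp add: R_form_def)

lemma cyclotomic_dvd_R_form_power: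
  assumes "b \<ge> 1" "cyclotomic b dvd R_poly t" "coprime j b"
  shows "cyclotomic b dvd R_form ([:0, 1:] ^ j) (([:0, 1:] ^ j) ^ (4 * t)) (([:0, 1:] ^ j) ^ (2 * t))"
proof (rule cyclotomic_dvd_if_roots[OF assms(1)])
  fix z
  assume "z \<in> primitive_roots_of_unity b"
  then have "poly (cyclotomic b) (z ^ j) = 0"
    using assms by (simp add: poly_cyclotomic_primitive_root primitive_root_pow_coprime)
  with assms(2) have "poly (R_poly t) (z ^ j) = 0"
    by (meson dvd_trans poly_eq_0_iff_dvd)
  then show "poly (R_form ([:0, 1:] ^ j) (([:0, 1:] ^ j) ^ (4 * t)) (([:0, 1:] ^ j) ^ (2 * t))) z = 0"
    by (simp add: poly_R_form poly_R_poly)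
qed

lemma reduction_mod_2_dvd_R_form:
  assumes "b \<ge> 1" "cyclotomic b dvd R_poly t" "coprime j b"
    and "cyclotomic b = map_poly of_int P" "lead_coeff P = 1"
  shows "map_poly of_int P dvd R_form (X ^ j) ((X ^ j) ^ (4 * t)) ((X ^ j) ^ (2 * t))"
proof -
  define F :: "int poly"
    where "F = R_form ([:0, 1:] ^ j) (([:0, 1:] ^ j) ^ (4 * t)) (([:0, 1:] ^ j) ^ (2 * t))"
  have "map_poly (of_int :: int \<Rightarrow> complex) F
      = R_form ([:0, 1:] ^ j) (([:0, 1:] ^ j) ^ (4 * t)) (([:0, 1:] ^ j) ^ (2 * t))"
    by (simp add: F_def map_poly_of_int_R_form map_poly_pCons)
  then have "map_poly (of_int :: int \<Rightarrow> complex) P dvd map_poly of_int F"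
    using cyclotomic_dvd_R_form_power[OF assms(1-3)] assms(4) by simp
  then have "P dvd F"
    by (rule dvd_if_map_poly_of_int_dvd[OF assms(5)])
  then have "map_poly (of_int :: int \<Rightarrow> bit) P dvd map_poly of_int F"
    by (elim dvdE) simp
  moreover have "map_poly (of_int :: int \<Rightarrow> bit) F = R_form (X ^ j) ((X ^ j) ^ (4 * t)) ((X ^ j) ^ (2 * t))"
    by (simp add: F_def map_poly_of_int_R_form map_poly_pCons X_def)
  ultimately show ?thesis by simp
qed

lemma cyclotomic_mod_2_square:
  assumes "4 dvd b" "b \<ge> 8"
  obtains P :: "int poly" and e :: "bit poly"
  where "cyclotomic b = map_poly of_int P" "lead_coeff P = 1"
    "map_poly of_int P = e ^ 2" "coprime e X" "degree e \<ge> 2"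
proof -
  have b: "b \<ge> 1" using assms(2) by simp
  obtain P where P: "cyclotomic b = map_poly of_int P" "lead_coeff P = 1"
    using cyclotomic_int_poly[OF b] by blast
  have "coeff (map_poly of_int P :: bit poly) n = 0" if "odd n" for n
    using coeff_cyclotomic_odd[OF b assms(1) that] by (simp add: P coeff_map_poly)
  then obtain e where e: "map_poly of_int P = (e :: bit poly) ^ 2"
    by (rule bit_poly_square_if_odd_coeffs_zero)
  have "\<bar>coeff P 0\<bar> = 1"
    using norm_coeff_0_cyclotomic[OF b] by (simp add: P coeff_map_poly)
  then have "coeff P 0 = 1 \<or> coeff P 0 = -1" by auto
  then have "(of_int (coeff P 0) :: bit) = 1" by auto
  then have "coeff e 0 * coeff e 0 = 1"
    using arg_cong[OF e, of "\<lambda>p. coeff p 0"]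
    by (simp add: coeff_map_poly power2_eq_square coeff_mult_0)
  then have "poly e 0 \<noteq> 0" by (auto simp: poly_0_coeff_0)
  then have "coprime e X"
    using coprime_linear_poly_iff[of e 0] by (auto simp: X_def)
  have "degree (e ^ 2) = degree P"
    using P(2) by (simp flip: e add: map_poly_degree_eq)
  also have "\<dots> = degree (cyclotomic b)"
    using degree_map_poly[of "of_int :: int \<Rightarrow> complex" P] by (simp add: P(1))
  also have "\<dots> = card (primitive_roots_of_unity b)"
    using b by (rule degree_cyclotomic)
  finally have "degree (e ^ 2) \<ge> 4"
    using card_primitive_roots_of_unity_ge_4[OF assms] by simp
  then have "degree e \<ge> 2"
    by (cases "e = 0") (simp_all add: degree_power_eq)
  with P e \<open>coprime e X\<close> that show ?thesis by blast
qed

lemma imaginary_unit_primitive_root_4: "\<i> \<in> primitive_roots_of_unity 4"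
  unfolding primitive_roots_of_unity_def
proof (intro CollectI conjI allI impI)
  show "\<i> ^ 4 = 1" by (simp add: power_mult[of \<i> 2 2, simplified])
  fix k :: nat
  assume "0 < k \<and> k < 4"
  then have "k = 1 \<or> k = 2 \<or> k = 3" by auto
  then show "\<i> ^ k \<noteq> 1" by (auto simp: power3_eq_cube complex_eq_iff)
qed

lemma poly_R_poly_imaginary_unit: "poly (R_poly t) \<i> \<noteq> 0"
proof -
  have i4: "\<i> ^ 4 = 1" by (simp add: power_mult[of \<i> 2 2, simplified])
  have "\<i> ^ 5 = \<i>" "\<i> ^ 7 = - \<i>" "\<i> ^ 9 = \<i>"
    using power_add[of \<i> 4 1] power_add[of \<i> 4 3] power_add[of \<i> 4 5] i4
    by (simp_all add: power3_eq_cube)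
  then have "R_form \<i> 1 v = 2 * v * (1 + \<i>)" for v
    by (simp add: R_form_def algebra_simps)
  moreover have "\<i> ^ (4 * t) = 1" "\<i> ^ (2 * t) = (-1) ^ t"
    by (simp_all add: power_mult i4)
  ultimately show ?thesis
    by (simp add: poly_R_poly complex_eq_iff)
qed

lemma not_cyclotomic_4_dvd_R_poly: "\<not> cyclotomic 4 dvd R_poly t"
proof
  assume "cyclotomic 4 dvd R_poly t"
  moreover have "poly (cyclotomic 4) \<i> = 0"
    using poly_cyclotomic_primitive_root[OF _ imaginary_unit_primitive_root_4] by simp
  ultimately have "poly (R_poly t) \<i> = 0"
    by (meson dvd_trans poly_eq_0_iff_dvd)
  with poly_R_poly_imaginary_unit show False by blast
qed

theorem mainTheorem6:
  fixes t b :: nat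
  assumes "b \<ge> 1"
    and "cyclotomic b dvd R_poly t"
  shows "\<not> (4 dvd b)"
proof
  assume "4 dvd b"
  then obtain c where c: "b = 4 * c" ..
  with assms not_cyclotomic_4_dvd_R_poly have "b \<ge> 8" by (cases "c = 1") auto
  then obtain P e where P: "cyclotomic b = map_poly of_int P" "lead_coeff P = 1"
    and e: "map_poly of_int P = e ^ 2" "coprime e X" "degree e \<ge> 2"
    using cyclotomic_mod_2_square[OF \<open>4 dvd b\<close>] by blast
  have "coprime (3 :: nat) 65"
    by (simp add: coprime_iff_gcd_eq_1 gcd_non_0_nat)
  with assms(1) obtain j where j: "j mod 65 = 3" "coprime j b"
    using exists_coprime_in_residue_class[of 3 65 b] by auto
  with c have "odd j"
    using coprime_common_divisor[of j b 2] by fastforce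
  have "e ^ 2 dvd R_form X (X ^ (4 * t)) (X ^ (2 * t))"
    using reduction_mod_2_dvd_R_form[OF assms _ P, of 1] e(1) by simp
  moreover have "e ^ 2 dvd R_form (X ^ j) ((X ^ j) ^ (4 * t)) ((X ^ j) ^ (2 * t))"
    using reduction_mod_2_dvd_R_form[OF assms j(2) P] e(1) by simp
  ultimately show False
    by (rule R_form_no_common_square_divisor[OF e(2,3) \<open>odd j\<close> j(1)])
qed

end
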